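(* Let $\lambda$ be a partition with $d$ distinct part sizes and parameters $(h_1,\dots,h_d)$, $(v_1,\dots,v_d)$. Define $p^{\rm col}_{r,s}(q,t)=p_{r,s}(q^{-1},t^{-1})$ and $\overline{p}^{\rm col}_{r,s}(q,t)=\overline{p}_{r,s}(q^{-1},t^{-1})$. Then for $0\le s\le d$, \[ p^{\rm col}_{r,s}(q,t)=\begin{cases}q^{h_{s+1,d}}\alpha_s&r=0,\\ \tau^{\rm col}_{r,s}\dfrac{\alpha_s\beta_r}{\gamma'_{r,s}}&1\le r\le d,\end{cases}\qquad \overline{p}^{\rm col}_{r,s}(q,t)=\begin{cases}q^{h_{s+1,d}}\overline{\alpha}_s&r=0,\\ \tau^{\rm col}_{r,s}\dfrac{\overline{\alpha}_s\overline{\beta}_r}{\gamma'_{r,s}}&1\le r\le d,\end{cases} \] where (all of $\alpha_s,\overline{\alpha}_s,\beta_r,\overline{\beta}_r,\gamma'_{r,s}$ evaluated at $(q,t)$) $\tau^{\rm col}_{r,s}=q^{-1+h_{r,s}}t^{1+2v_{r+1,s}}$ if $0<r\le s$, and $\tau^{\rm col}_{r,s}=q^{h_{s+1,r-1}}$ if $r>s$.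
   Context: Partitions are Young diagrams in French convention (cells $(x,y)\in\mathbb{Z}_{>0}^2$, $x\le\lambda_y$), $\lambda'$ the conjugate; for $c=(x,y)\in\lambda$, $a_\lambda(c)=\lambda_y-x$, $\ell_\lambda(c)=\lambda'_x-y$; $n(\kappa)=\sum_{c\in\kappa}\ell_\kappa(c)$, $n'(\kappa)=\sum_{c\in\kappa}a_\kappa(c)$, $n(\rho/\kappa)=n(\rho)-n(\kappa)$, $n'(\rho/\kappa)=n'(\rho)-n'(\kappa)$. For $\kappa\subseteq\rho$, $\mathcal{R}_{\rho/\kappa}$ (resp. $\mathcal{C}_{\rho/\kappa}$): cells of $\kappa$ in a row (resp. column) containing a cell of $\rho/\kappa$. $[i,j]=1-q^it^j$, $[i,j]^+=[i+1,j-1]$, $[i,j]^-=[i-1,j+1]$. For $\kappa\lessdot\rho$ (one-cell difference): $\alpha_{\rho/\kappa}=\prod_{c\in\mathcal{R}_{\rho/\kappa}}\frac{[a_\kappa(c),\ell_\kappa(c)+1]}{[a_\rho(c),\ell_\rho(c)+1]}\prod_{c\in\mathcal{C}_{\rho/\kappa}}\frac{[a_\kappa(c)+1,\ell_\kappa(c)]}{[a_\rho(c)+1,\ell_\rho(c)]}$, $\overline{\alpha}_{\rho/\kappa}=\prod_{c\in\mathcal{R}_{\rho/\kappa}}\frac{[a_\kappa(c)+1,\ell_\kappa(c)]}{[a_\rho(c)+1,\ell_\rho(c)]}\prod_{c\in\mathcal{C}_{\rho/\kappa}}\frac{[a_\kappa(c),\ell_\kappa(c)+1]}{[a_\rho(c),\ell_\rho(c)+1]}$,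 $\beta=1/\alpha$, $\overline{\beta}=1/\overline{\alpha}$. For $\mu\lessdot\lambda\lessdot\nu$, with $A=n'(\lambda/\mu)-n'(\nu/\lambda)$, $B=n(\nu/\lambda)-n(\lambda/\mu)$: $\gamma_{\nu/\lambda/\mu}=\frac{(1-q^At^B)(1-q^{A+1}t^{B-1})}{(1-q)(1-t)}$. Probabilities: $\mathcal{P}_\lambda(\lambda\rightarrow\nu)=t^{n(\nu/\lambda)}\alpha_{\nu/\lambda}$, $\overline{\mathcal{P}}_\lambda(\lambda\leftarrow\nu)=t^{n(\nu/\lambda)}\overline{\alpha}_{\nu/\lambda}$, for $\mu\lessdot\lambda$: $\mathcal{P}_\lambda(\mu\rightarrow\nu)=t^{B-1}\alpha_{\nu/\lambda}\beta_{\lambda/\mu}/\gamma_{\nu/\lambda/\mu}$, $\overline{\mathcal{P}}_\lambda(\mu\leftarrow\nu)=t^{B-1}\overline{\alpha}_{\nu/\lambda}\overline{\beta}_{\lambda/\mu}/\gamma_{\nu/\lambda/\mu}$. Parameters: if $\lambda$ has distinct part sizes $u_1>\dots>u_d>0$, $v_i$ is the multiplicity of $u_i$ and $h_i=u_i-u_{i+1}$ ($u_{d+1}=0$); $h_{i,j}=h_i+\dots+h_j$, $v_{i,j}=v_i+\dots+v_j$ for $i\le j$, and $0$ for $i>j$. For $0\le s\le d$, $\lambda^{(+s)}$ adds a cell in row $v_{1,s}+1$; $\lambda^{(-0)}=\lambda$, and for $1\le r\le d$, $\lambda^{(-r)}$ removes a cell from row $v_{1,r}$. $\alpha_s=\alpha_{\lambda^{(+s)}/\lambda}$,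 $\overline{\alpha}_s=\overline{\alpha}_{\lambda^{(+s)}/\lambda}$, $\beta_r=\beta_{\lambda/\lambda^{(-r)}}$, $\overline{\beta}_r=\overline{\beta}_{\lambda/\lambda^{(-r)}}$, $p_{r,s}=\mathcal{P}_\lambda(\lambda^{(-r)}\rightarrow\lambda^{(+s)})$, $\overline{p}_{r,s}=\overline{\mathcal{P}}_\lambda(\lambda^{(-r)}\leftarrow\lambda^{(+s)})$, and $\gamma'_{r,s}=\frac{[h_{r,s},v_{r+1,s}][h_{r,s},v_{r+1,s}]^-}{[0,1][1,0]}$ if $0<r\le s$, $\gamma'_{r,s}=\frac{[h_{s+1,r-1},v_{s+1,r}][h_{s+1,r-1},v_{s+1,r}]^+}{[0,1][1,0]}$ if $r>s$. *)

theory Defs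
  imports Complex_Main
begin

text \<open>Partitions are represented as weakly decreasing lists of positive naturals
  (lambda_1 >= lambda_2 >= ... > 0).  Cells are pairs (x,y) of positive naturals with
  x <= lambda_y (French convention).\<close>

definition is_partition :: "nat list \<Rightarrow> bool" where
  "is_partition lam \<longleftrightarrow> sorted (rev lam) \<and> 0 \<notin> set lam"

definition prow :: "nat list \<Rightarrow> nat \<Rightarrow> nat" where
  "prow lam y = (if 1 \<le> y \<and> y \<le> length lam then lam ! (y - 1) else 0)"

definition pconj :: "nat list \<Rightarrow> nat \<Rightarrow> nat" where
  "pconj lam x = card {y \<in> {1..length lam}. x \<le> prow lam y}"

definition cells :: "nat list \<Rightarrow> (nat \<times> nat) set" where
  "cells lam = {(x, y). 1 \<le> y \<and> 1 \<le> x \<and> x \<le> prow lam y}"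

definition arm :: "nat list \<Rightarrow> nat \<times> nat \<Rightarrow> int" where
  "arm lam c = int (prow lam (snd c)) - int (fst c)"

definition leg :: "nat list \<Rightarrow> nat \<times> nat \<Rightarrow> int" where
  "leg lam c = int (pconj lam (fst c)) - int (snd c)"

definition nfun :: "nat list \<Rightarrow> int" where
  "nfun kap = (\<Sum>c\<in>cells kap. leg kap c)"

definition nfun' :: "nat list \<Rightarrow> int" where
  "nfun' kap = (\<Sum>c\<in>cells kap. arm kap c)"

definition Rset :: "nat list \<Rightarrow> nat list \<Rightarrow> (nat \<times> nat) set" where
  "Rset rho kap = {c \<in> cells kap. \<exists>e \<in> cells rho - cells kap. snd e = snd c}"

definition Cset :: "nat list \<Rightarrow> nat list \<Rightarrow> (nat \<times> nat) set" where
  "Cset rho kap = {c \<in> cells kap. \<exists>e \<in> cells rho - cells kap. fst e = fst c}"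

definition br :: "real \<Rightarrow> real \<Rightarrow> int \<Rightarrow> int \<Rightarrow> real" where
  "br q t i j = 1 - q powi i * t powi j"

definition alpha :: "real \<Rightarrow> real \<Rightarrow> nat list \<Rightarrow> nat list \<Rightarrow> real" where
  "alpha q t rho kap =
     (\<Prod>c\<in>Rset rho kap. br q t (arm kap c) (leg kap c + 1) / br q t (arm rho c) (leg rho c + 1)) *
     (\<Prod>c\<in>Cset rho kap. br q t (arm kap c + 1) (leg kap c) / br q t (arm rho c + 1) (leg rho c))"

definition alphabar :: "real \<Rightarrow> real \<Rightarrow> nat list \<Rightarrow> nat list \<Rightarrow> real" where
  "alphabar q t rho kap =
     (\<Prod>c\<in>Rset rho kap. br q t (arm kap c + 1) (leg kap c) / br q t (arm rho c + 1) (leg rho c)) *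
     (\<Prod>c\<in>Cset rho kap. br q t (arm kap c) (leg kap c + 1) / br q t (arm rho c) (leg rho c + 1))"

definition beta :: "real \<Rightarrow> real \<Rightarrow> nat list \<Rightarrow> nat list \<Rightarrow> real" where
  "beta q t rho kap = 1 / alpha q t rho kap"

definition betabar :: "real \<Rightarrow> real \<Rightarrow> nat list \<Rightarrow> nat list \<Rightarrow> real" where
  "betabar q t rho kap = 1 / alphabar q t rho kap"

definition gA :: "nat list \<Rightarrow> nat list \<Rightarrow> nat list \<Rightarrow> int" where
  "gA nu lam mu = (nfun' lam - nfun' mu) - (nfun' nu - nfun' lam)"

definition gB :: "nat list \<Rightarrow> nat list \<Rightarrow> nat list \<Rightarrow> int" where
  "gB nu lam mu = (nfun nu - nfun lam) - (nfun lam - nfun mu)"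

definition gamma :: "real \<Rightarrow> real \<Rightarrow> nat list \<Rightarrow> nat list \<Rightarrow> nat list \<Rightarrow> real" where
  "gamma q t nu lam mu =
     (1 - q powi (gA nu lam mu) * t powi (gB nu lam mu)) *
     (1 - q powi (gA nu lam mu + 1) * t powi (gB nu lam mu - 1)) / ((1 - q) * (1 - t))"

definition P0 :: "real \<Rightarrow> real \<Rightarrow> nat list \<Rightarrow> nat list \<Rightarrow> real" where
  "P0 q t lam nu = t powi (nfun nu - nfun lam) * alpha q t nu lam"

definition P0bar :: "real \<Rightarrow> real \<Rightarrow> nat list \<Rightarrow> nat list \<Rightarrow> real" where
  "P0bar q t lam nu = t powi (nfun nu - nfun lam) * alphabar q t nu lam"

definition P1 :: "real \<Rightarrow> real \<Rightarrow> nat list \<Rightarrow> nat list \<Rightarrow> nat list \<Rightarrow> real" where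
  "P1 q t lam mu nu = t powi (gB nu lam mu - 1) * alpha q t nu lam * beta q t lam mu / gamma q t nu lam mu"

definition P1bar :: "real \<Rightarrow> real \<Rightarrow> nat list \<Rightarrow> nat list \<Rightarrow> nat list \<Rightarrow> real" where
  "P1bar q t lam mu nu = t powi (gB nu lam mu - 1) * alphabar q t nu lam * betabar q t lam mu / gamma q t nu lam mu"

definition dpar :: "nat list \<Rightarrow> nat" where
  "dpar lam = length (remdups lam)"

text \<open>u_i (1-based), with u_{d+1} = 0.\<close>
definition upar :: "nat list \<Rightarrow> nat \<Rightarrow> nat" where
  "upar lam i = (if 1 \<le> i \<and> i \<le> dpar lam then remdups lam ! (i - 1) else 0)"

definition vpar :: "nat list \<Rightarrow> nat \<Rightarrow> nat" where
  "vpar lam i = length (filter (\<lambda>x. x = upar lam i) lam)"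

definition hpar :: "nat list \<Rightarrow> nat \<Rightarrow> nat" where
  "hpar lam i = upar lam i - upar lam (i + 1)"

text \<open>h_{i,j}, v_{i,j}; these are 0 when i > j.\<close>
definition hsum :: "nat list \<Rightarrow> nat \<Rightarrow> nat \<Rightarrow> nat" where
  "hsum lam i j = (\<Sum>k\<in>{i..j}. hpar lam k)"

definition vsum :: "nat list \<Rightarrow> nat \<Rightarrow> nat \<Rightarrow> nat" where
  "vsum lam i j = (\<Sum>k\<in>{i..j}. vpar lam k)"

definition add_cell :: "nat list \<Rightarrow> nat \<Rightarrow> nat list" where
  "add_cell lam i = (if i = Suc (length lam) then lam @ [1] else lam[i - 1 := Suc (lam ! (i - 1))])"

definition rem_cell :: "nat list \<Rightarrow> nat \<Rightarrow> nat list" where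
  "rem_cell lam i = filter (\<lambda>x. 0 < x) (lam[i - 1 := lam ! (i - 1) - 1])"

definition lam_plus :: "nat list \<Rightarrow> nat \<Rightarrow> nat list" where
  "lam_plus lam s = add_cell lam (vsum lam 1 s + 1)"

definition lam_minus :: "nat list \<Rightarrow> nat \<Rightarrow> nat list" where
  "lam_minus lam r = (if r = 0 then lam else rem_cell lam (vsum lam 1 r))"

definition ppar :: "real \<Rightarrow> real \<Rightarrow> nat list \<Rightarrow> nat \<Rightarrow> nat \<Rightarrow> real" where
  "ppar q t lam r s = (if r = 0 then P0 q t lam (lam_plus lam s)
                       else P1 q t lam (lam_minus lam r) (lam_plus lam s))"

definition pbarpar :: "real \<Rightarrow> real \<Rightarrow> nat list \<Rightarrow> nat \<Rightarrow> nat \<Rightarrow> real" where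
  "pbarpar q t lam r s = (if r = 0 then P0bar q t lam (lam_plus lam s)
                       else P1bar q t lam (lam_minus lam r) (lam_plus lam s))"

definition pcol :: "real \<Rightarrow> real \<Rightarrow> nat list \<Rightarrow> nat \<Rightarrow> nat \<Rightarrow> real" where
  "pcol q t lam r s = ppar (1 / q) (1 / t) lam r s"

definition pbarcol :: "real \<Rightarrow> real \<Rightarrow> nat list \<Rightarrow> nat \<Rightarrow> nat \<Rightarrow> real" where
  "pbarcol q t lam r s = pbarpar (1 / q) (1 / t) lam r s"

definition gammap :: "real \<Rightarrow> real \<Rightarrow> nat list \<Rightarrow> nat \<Rightarrow> nat \<Rightarrow> real" where
  "gammap q t lam r s =
    (if 0 < r \<and> r \<le> s then
       br q t (hsum lam r s) (vsum lam (r + 1) s) * br q t (int (hsum lam r s) - 1) (int (vsum lam (r + 1) s) + 1)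
         / (br q t 0 1 * br q t 1 0)
     else
       br q t (hsum lam (s + 1) (r - 1)) (vsum lam (s + 1) r) *
       br q t (int (hsum lam (s + 1) (r - 1)) + 1) (int (vsum lam (s + 1) r) - 1)
         / (br q t 0 1 * br q t 1 0))"

definition taucol :: "real \<Rightarrow> real \<Rightarrow> nat list \<Rightarrow> nat \<Rightarrow> nat \<Rightarrow> real" where
  "taucol q t lam r s =
    (if 0 < r \<and> r \<le> s then q powi (-1 + int (hsum lam r s)) * t powi (1 + 2 * int (vsum lam (r + 1) s))
     else q powi (int (hsum lam (s + 1) (r - 1))))"

text \<open>Genericity of (q,t): identities of rational functions in q,t are stated at all
  points where no monomial q^i t^j with (i,j) \<noteq> (0,0) equals 1 (a Zariski-dense set).\<close>
definition generic_qt :: "real \<Rightarrow> real \<Rightarrow> bool" where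
  "generic_qt q t \<longleftrightarrow> q \<noteq> 0 \<and> t \<noteq> 0 \<and> (\<forall>i j :: int. (i, j) \<noteq> (0, 0) \<longrightarrow> q powi i * t powi j \<noteq> 1)"

end

(*
  Replacing (q, t) by (1/q, 1/t) turns a bracket [i, j] into [-i, -j] = -q^-i t^-j [i, j].
  If rho arises from kappa by adding the cell (kappa_y + 1, y), then across R only arms and across C
  only legs change (by one), so every factor of alpha or alphabar picks up one q (on R) or one t
  (on C); as |R| = kappa_y and |C| = y - 1, both get multiplied by q^kappa_y t^(y-1), which also
  equals q^n'(rho/kappa) t^n(rho/kappa).  Likewise gamma picks up q^-2A t^(2-2B), and the monomials
  in P(mu -> nu) at (1/q, 1/t) collapse to q^A t^(2B-1).  For lambda^(+s) the new cell lies in row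
  v_{1,s} + 1 of length u_{s+1}, for lambda^(-r) the removed one in row v_{1,r} of length u_r, so
  A = u_r - 1 - u_{s+1} and B = v_{1,s} + 1 - v_{1,r}.  Written through h_{i,j} and v_{i,j} these
  give tau^col and gamma' directly when r <= s; when r > s both brackets of gamma are reflected
  [i, j] -> [-i, -j], which leaves q^h_{s+1,r-1}.
*)

theory Submission
  imports Defs
begin

section \<open>Inverting q and t\<close>

lemma br_inverse: "br (1/q) (1/t) i j = br q t (-i) (-j)"
  by (simp add: br_def power_int_divide_distrib power_int_minus_divide)

lemma br_uminus:
  fixes q t :: real
  assumes "q \<noteq> 0" "t \<noteq> 0"
  shows "br q t (-i) (-j) = - (q powi (-i) * t powi (-j)) * br q t i j"
  using assms by (simp add: br_def power_int_minus field_simps)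

lemma br_uminus_shift:
  fixes q t :: real
  assumes "q \<noteq> 0" "t \<noteq> 0"
  shows "br q t (-A - 1) (1 - B) = - (q powi (-A - 1) * t powi (1 - B)) * br q t (A + 1) (B - 1)"
  using br_uminus[OF assms, of "A + 1" "B - 1"] by simp

lemma br_ratio_inverse:
  fixes q t :: real
  assumes "q \<noteq> 0" "t \<noteq> 0"
  shows "br (1/q) (1/t) a b / br (1/q) (1/t) c d
     = q powi (c - a) * t powi (d - b) * (br q t a b / br q t c d)"
  using assms by (simp add: br_inverse br_uminus power_int_diff power_int_minus field_simps)

definition gamma_ab :: "real \<Rightarrow> real \<Rightarrow> int \<Rightarrow> int \<Rightarrow> real" where
  "gamma_ab q t A B = br q t A B * br q t (A + 1) (B - 1) / (br q t 0 1 * br q t 1 0)"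

lemma gamma_eq_gamma_ab: "gamma q t nu lam mu = gamma_ab q t (gA nu lam mu) (gB nu lam mu)"
  by (simp add: gamma_def gamma_ab_def br_def)

lemma gamma_ab_inverse:
  fixes q t :: real
  assumes "q \<noteq> 0" "t \<noteq> 0"
  shows "gamma_ab (1/q) (1/t) A B = q powi (-2 * A) * t powi (2 - 2 * B) * gamma_ab q t A B"
proof -
  have "br q t 0 (-1) = - (t powi (-1)) * br q t 0 1" "br q t (-1) 0 = - (q powi (-1)) * br q t 1 0"
    using br_uminus[OF assms, of 0 1] br_uminus[OF assms, of 1 0] by simp_all
  then have "gamma_ab (1/q) (1/t) A B
      = br q t (-A) (-B) * br q t (-A - 1) (1 - B) / ((- (t powi (-1)) * br q t 0 1) * (- (q powi (-1)) * br q t 1 0))"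
    by (simp add: gamma_ab_def br_inverse)
  also have "\<dots> = (q powi (-A) * q powi (-A)) * (t powi (1 - B) * t powi (1 - B)) * gamma_ab q t A B"
    unfolding gamma_ab_def br_uminus[OF assms, of A B] br_uminus_shift[OF assms]
    using assms by (simp add: power_int_diff power_int_minus field_simps)
  also have "\<dots> = q powi (-2 * A) * t powi (2 - 2 * B) * gamma_ab q t A B"
    using assms power_int_add[of q "-A" "-A"] power_int_add[of t "1 - B" "1 - B"]
    by (simp add: algebra_simps)
  finally show ?thesis .
qed

lemma gamma_ab_reflect:
  fixes q t :: real
  assumes "q \<noteq> 0" "t \<noteq> 0"
  shows "gamma_ab q t (-A - 1) (1 - B) = q powi (-2 * A - 1) * t powi (1 - 2 * B) * gamma_ab q t A B"
proof -
  have "gamma_ab q t (-A - 1) (1 - B)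
      = (q powi (-A) * q powi (-A - 1)) * (t powi (-B) * t powi (1 - B)) * gamma_ab q t A B"
    unfolding gamma_ab_def
    using assms by (simp add: br_uminus[OF assms, of A B] br_uminus_shift[OF assms] field_simps)
  also have "\<dots> = q powi (-2 * A - 1) * t powi (1 - 2 * B) * gamma_ab q t A B"
    using assms power_int_add[of q "-A" "-A - 1"] power_int_add[of t "-B" "1 - B"]
    by (simp add: algebra_simps)
  finally show ?thesis .
qed

section \<open>Adding one cell\<close>

definition column_rows :: "nat list \<Rightarrow> nat \<Rightarrow> nat set" where
  "column_rows lam x = {y. 1 \<le> y \<and> x \<le> prow lam y}"

lemma column_rows_subset: "1 \<le> x \<Longrightarrow> column_rows lam x \<subseteq> {1..length lam}"
  by (auto simp: column_rows_def prow_def split: if_splits)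

lemma finite_column_rows: "1 \<le> x \<Longrightarrow> finite (column_rows lam x)"
  using column_rows_subset finite_subset by blast

lemma pconj_eq_card_column_rows:
  assumes "1 \<le> x"
  shows "pconj lam x = card (column_rows lam x)"
proof -
  have "{y \<in> {1..length lam}. x \<le> prow lam y} = column_rows lam x"
    using column_rows_subset[OF assms, of lam] by (auto simp: column_rows_def)
  then show ?thesis
    by (simp add: pconj_def)
qed

lemma finite_cells: "finite (cells lam)"
proof -
  have row_bound: "prow lam y \<le> Max (insert 0 (set lam))" for y
    by (auto simp: prow_def)
  have "cells lam \<subseteq> {0..Max (insert 0 (set lam))} \<times> {0..length lam}"
  proof (clarsimp simp: cells_def)
    fix a b
    assume "Suc 0 \<le> b" "Suc 0 \<le> a" "a \<le> prow lam b"
    then show "a \<le> Max (insert 0 (set lam)) \<and> b \<le> length lam"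
      using row_bound[of b] by (auto simp: prow_def split: if_splits)
  qed
  then show ?thesis
    by (rule finite_subset) auto
qed

text \<open>\<open>rho\<close> arises from \<open>kap\<close> by adding the cell \<open>(prow kap y + 1, y)\<close>; the hypothesis on
  \<open>pconj\<close> says that this cell lies directly on top of its column.\<close>

locale cell_added =
  fixes rho kap :: "nat list" and y :: nat
  assumes row_pos: "1 \<le> y"
    and prow_rho: "prow rho = (prow kap)(y := prow kap y + 1)"
    and pconj_kap: "pconj kap (prow kap y + 1) = y - 1"
begin

abbreviation (input) x where "x \<equiv> prow kap y + 1"

lemma cells_rho: "cells rho = insert (x, y) (cells kap)"
  using row_pos by (auto simp: cells_def prow_rho)

lemma new_cell_notin: "(x, y) \<notin> cells kap"
  by (auto simp: cells_def)

lemma column_rows_rho: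
  "column_rows rho x' = (if x' = x then insert y (column_rows kap x') else column_rows kap x')"
  using row_pos by (auto simp: column_rows_def prow_rho)

lemma pconj_rho:
  assumes "1 \<le> x'"
  shows "pconj rho x' = pconj kap x' + (if x' = x then 1 else 0)"
proof -
  have "y \<notin> column_rows kap x"
    by (simp add: column_rows_def)
  then show ?thesis
    using assms finite_column_rows[OF assms, of kap] by (auto simp: pconj_eq_card_column_rows column_rows_rho)
qed

lemma arm_rho: "arm rho c = arm kap c + (if snd c = y then 1 else 0)"
  by (auto simp: arm_def prow_rho)

lemma leg_rho: "c \<in> cells kap \<Longrightarrow> leg rho c = leg kap c + (if fst c = x then 1 else 0)"
  by (auto simp: cells_def leg_def pconj_rho)

lemma Rset_eq: "Rset rho kap = {c \<in> cells kap. snd c = y}"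
  using new_cell_notin by (auto simp: Rset_def cells_rho intro: bexI[of _ "(x, y)"])

lemma Cset_eq: "Cset rho kap = {c \<in> cells kap. fst c = x}"
  using new_cell_notin by (auto simp: Cset_def cells_rho intro: bexI[of _ "(x, y)"])

lemma card_Rset: "card (Rset rho kap) = prow kap y"
proof -
  have "Rset rho kap = (\<lambda>x'. (x', y)) ` {1..prow kap y}"
    using row_pos by (auto simp: Rset_eq cells_def)
  then show ?thesis
    by (simp add: card_image inj_on_def)
qed

lemma card_Cset: "card (Cset rho kap) = y - 1"
proof -
  have "Cset rho kap = (\<lambda>y'. (x, y')) ` column_rows kap x"
    by (auto simp: Cset_eq cells_def column_rows_def)
  then show ?thesis
    using pconj_kap by (simp add: card_image inj_on_def pconj_eq_card_column_rows)
qed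

lemma arm_leg_Rset: "c \<in> Rset rho kap \<Longrightarrow> arm rho c = arm kap c + 1 \<and> leg rho c = leg kap c"
  by (auto simp: Rset_eq cells_def arm_rho leg_rho)

lemma arm_leg_Cset: "c \<in> Cset rho kap \<Longrightarrow> arm rho c = arm kap c \<and> leg rho c = leg kap c + 1"
  by (auto simp: Cset_eq cells_def arm_rho leg_rho)

lemma alpha_inverse:
  fixes q t :: real
  assumes "q \<noteq> 0" "t \<noteq> 0"
  shows "alpha (1/q) (1/t) rho kap = q ^ prow kap y * t ^ (y - 1) * alpha q t rho kap"
    and "alphabar (1/q) (1/t) rho kap = q ^ prow kap y * t ^ (y - 1) * alphabar q t rho kap"
  unfolding alpha_def alphabar_def
  by (simp_all del: times_divide_eq_right cong: prod.cong
      add: br_ratio_inverse[OF assms] arm_leg_Rset arm_leg_Cset prod.distrib card_Rset card_Cset)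

lemma nfun_diff: "nfun rho - nfun kap = int (y - 1)"
proof -
  have "leg rho (x, y) = 0"
    using pconj_kap row_pos by (simp add: leg_def pconj_rho)
  then have "nfun rho = (\<Sum>c\<in>cells kap. leg rho c)"
    using finite_cells new_cell_notin by (simp add: nfun_def cells_rho)
  also have "\<dots> = (\<Sum>c\<in>cells kap. leg kap c + (if fst c = x then 1 else 0))"
    by (rule sum.cong) (auto simp: leg_rho)
  also have "\<dots> = nfun kap + card (Cset rho kap)"
    by (simp add: sum.distrib nfun_def sum.If_cases finite_cells Int_def Cset_eq)
  finally show ?thesis
    by (simp add: card_Cset)
qed

lemma nfun'_diff: "nfun' rho - nfun' kap = int (prow kap y)"
proof -
  have "arm rho (x, y) = 0"
    by (simp add: arm_def prow_rho)
  then have "nfun' rho = (\<Sum>c\<in>cells kap. arm rho c)"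
    using finite_cells new_cell_notin by (simp add: nfun'_def cells_rho)
  also have "\<dots> = (\<Sum>c\<in>cells kap. arm kap c + (if snd c = y then 1 else 0))"
    by (simp add: arm_rho)
  also have "\<dots> = nfun' kap + card (Rset rho kap)"
    by (simp add: sum.distrib nfun'_def sum.If_cases finite_cells Int_def Rset_eq)
  finally show ?thesis
    by (simp add: card_Rset)
qed

lemma P0_inverse:
  fixes q t :: real
  assumes "q \<noteq> 0" "t \<noteq> 0"
  shows "P0 (1/q) (1/t) kap rho = q ^ prow kap y * alpha q t rho kap"
    and "P0bar (1/q) (1/t) kap rho = q ^ prow kap y * alphabar q t rho kap"
  using assms by (simp_all add: P0_def P0bar_def alpha_inverse nfun_diff power_int_of_nat power_one_over)

end

text \<open>Collects the monomials that inverting \<open>q, t\<close> creates in the four factors of \<open>P1\<close>: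
  the prefactor, \<open>alpha\<close> of the upper cell, \<open>beta\<close> of the lower cell and \<open>gamma\<close>.\<close>

lemma P1_monomial:
  fixes q t a b g :: real and X Y A B :: int
  assumes "q \<noteq> 0" "t \<noteq> 0"
  shows "(1/t) powi (B - 1) * (q powi X * t powi (Y + B) * a) * (1 / (q powi (X + A) * t powi Y * b))
      / (q powi (-2 * A) * t powi (2 - 2 * B) * g)
    = q powi A * t powi (2 * B - 1) * a * (1 / b) / g"
proof -
  have double: "q powi (2 * A) = q powi A * q powi A" "t powi (2 * B) = t powi B * t powi B"
    using power_int_add[of q A A] power_int_add[of t B B] assms by (simp_all add: mult_2[symmetric])
  have "(1/t) powi (B - 1) = t / t powi B"
    using assms power_int_diff[of t B 1] by (simp add: power_int_divide_distrib)
  moreover have "t powi (2 * B - 1) = t powi B * t powi B / t"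
    using assms power_int_diff[of t "2 * B" 1] by (simp add: double)
  moreover have "q powi (-2 * A) = 1 / (q powi A * q powi A)"
    using power_int_minus_divide[of q "2 * A"] by (simp add: double)
  moreover have "t powi (2 - 2 * B) = t * t / (t powi B * t powi B)"
    using assms power_int_diff[of t 2 "2 * B"] by (simp add: double power2_eq_square)
  moreover have "q powi (X + A) = q powi X * q powi A" "t powi (Y + B) = t powi Y * t powi B"
    using assms by (simp_all add: power_int_add)
  ultimately show ?thesis
    using assms by (simp only:) (simp add: field_simps)
qed

lemma P1_inverse:
  fixes q t :: real
  assumes "cell_added nu lam y" "cell_added lam mu y'" and "q \<noteq> 0" "t \<noteq> 0"
  shows "P1 (1/q) (1/t) lam mu nu
      = q powi gA nu lam mu * t powi (2 * gB nu lam mu - 1) * alpha q t nu lam * beta q t lam mu / gamma q t nu lam mu"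
    and "P1bar (1/q) (1/t) lam mu nu
      = q powi gA nu lam mu * t powi (2 * gB nu lam mu - 1) * alphabar q t nu lam * betabar q t lam mu / gamma q t nu lam mu"
proof -
  interpret upper: cell_added nu lam y by fact
  interpret lower: cell_added lam mu y' by fact
  define A where "A = gA nu lam mu"
  define B where "B = gB nu lam mu"
  have "int (prow lam y) + A = int (prow mu y')" "int (y' - 1) + B = int (y - 1)"
    by (simp_all add: A_def B_def gA_def gB_def upper.nfun_diff lower.nfun_diff upper.nfun'_diff lower.nfun'_diff)
  then have monomial: "(1/t) powi (B - 1) * (q ^ prow lam y * t ^ (y - 1) * a) * (1 / (q ^ prow mu y' * t ^ (y' - 1) * b))
      / (q powi (-2 * A) * t powi (2 - 2 * B) * g)
    = q powi A * t powi (2 * B - 1) * a * (1 / b) / g" for a b g :: real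
    using P1_monomial[OF assms(3,4), where X = "int (prow lam y)" and Y = "int (y' - 1)" and A = A and B = B]
    by (simp add: power_int_of_nat)
  show "P1 (1/q) (1/t) lam mu nu
      = q powi A * t powi (2 * B - 1) * alpha q t nu lam * beta q t lam mu / gamma q t nu lam mu"
    using monomial by (simp add: P1_def beta_def upper.alpha_inverse lower.alpha_inverse assms
        gamma_eq_gamma_ab gamma_ab_inverse A_def B_def)
  show "P1bar (1/q) (1/t) lam mu nu
      = q powi A * t powi (2 * B - 1) * alphabar q t nu lam * betabar q t lam mu / gamma q t nu lam mu"
    using monomial by (simp add: P1bar_def betabar_def upper.alpha_inverse lower.alpha_inverse assms
        gamma_eq_gamma_ab gamma_ab_inverse A_def B_def)
qed

section \<open>Parameters of a partition\<close>

lemma add_cell_prow: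
  assumes "1 \<le> y" "y \<le> Suc (length lam)"
  shows "prow (add_cell lam y) = (prow lam)(y := prow lam y + 1)"
proof (cases "y = Suc (length lam)")
  case True
  then show ?thesis
    by (auto simp: fun_eq_iff add_cell_def prow_def nth_append)
next
  case False
  then show ?thesis
    using assms by (auto simp: fun_eq_iff add_cell_def prow_def nth_list_update)
qed

text \<open>\<open>rem_cell\<close> deletes a row that becomes empty, which leaves \<open>prow\<close> as expected only for
  the last row; hence the last hypothesis.\<close>

lemma rem_cell_prow:
  assumes "1 \<le> y" "y \<le> length lam" "0 \<notin> set lam"
    and "lam ! (y - 1) = 1 \<Longrightarrow> y = length lam"
  shows "prow (rem_cell lam y) = (prow lam)(y := prow lam y - 1)"
proof (cases "lam ! (y - 1) = 1")
  case False
  have "lam ! (y - 1) \<in> set lam"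
    using assms(1,2) by auto
  then have "lam ! (y - 1) \<noteq> 0"
    using assms(3) by metis
  then have "0 < lam ! (y - 1) - 1"
    using False by simp
  then have "0 \<notin> set (lam[y - 1 := lam ! (y - 1) - 1])"
    using assms(3) set_update_subset_insert[of lam "y - 1" "lam ! (y - 1) - 1"] by auto
  then have "rem_cell lam y = lam[y - 1 := lam ! (y - 1) - 1]"
    unfolding rem_cell_def filter_id_conv by (metis gr0I)
  then show ?thesis
    using assms(1,2) by (auto simp: fun_eq_iff prow_def nth_list_update)
next
  case True
  then have last_row: "y = length lam"
    by (rule assms(4))
  then obtain xs a where xs: "lam = xs @ [a]"
    using assms(1) by (metis le_zero_eq length_0_conv not_one_le_zero rev_exhaust)
  then have "lam[y - 1 := lam ! (y - 1) - 1] = xs @ [0]"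
    using True last_row by (simp add: nth_append)
  moreover have "0 \<notin> set xs"
    using assms(3) xs by simp
  ultimately have "rem_cell lam y = xs"
    unfolding rem_cell_def by (simp add: filter_id_conv) (metis gr0I)
  then show ?thesis
    using xs last_row True by (auto simp: fun_eq_iff prow_def nth_append)
qed

lemma initial_segment_eq:
  fixes S :: "nat set"
  assumes "S \<subseteq> {1..n}" "\<And>y y'. y \<in> S \<Longrightarrow> 1 \<le> y' \<Longrightarrow> y' \<le> y \<Longrightarrow> y' \<in> S"
  shows "S = {1..card S}"
  using assms
proof (induction n arbitrary: S)
  case 0
  then show ?case by auto
next
  case (Suc n)
  show ?case
  proof (cases "Suc n \<in> S")
    case True
    then have "S = {1..Suc n}"
      using Suc.prems by fastforce
    then show ?thesis by simp
  next
    case False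
    then have "S \<subseteq> {1..n}"
      using Suc.prems(1) by (auto simp: le_Suc_eq)
    then show ?thesis
      using Suc.IH Suc.prems(2) by blast
  qed
qed

lemma sorted_wrt_remdups: "sorted_wrt P xs \<Longrightarrow> sorted_wrt P (remdups xs)"
  by (induction xs) auto

lemma sorted_wrt_ge_distinct: "sorted_wrt (\<ge>) (xs :: 'a :: linorder list) \<Longrightarrow> distinct xs \<Longrightarrow> sorted_wrt (>) xs"
  by (induction xs) (auto simp: order.order_iff_strict)

lemma vsum_split: "r \<le> s \<Longrightarrow> vsum lam 1 s = vsum lam 1 r + vsum lam (Suc r) s"
  unfolding vsum_def using sum.ub_add_nat[of 1 r "vpar lam" "s - r"] by simp

context
  fixes lam :: "nat list"
  assumes part: "is_partition lam"
begin

lemma parts_antimono: "sorted_wrt (\<ge>) lam"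
  using part by (simp add: is_partition_def sorted_wrt_rev)

lemma parts_pos: "v \<in> set lam \<Longrightarrow> 0 < v"
  using part unfolding is_partition_def by (metis gr0I)

lemma distinct_parts_strict_antimono: "sorted_wrt (>) (remdups lam)"
  using parts_antimono sorted_wrt_remdups sorted_wrt_ge_distinct distinct_remdups by blast

lemma upar_in_set: "1 \<le> k \<Longrightarrow> k \<le> dpar lam \<Longrightarrow> upar lam k \<in> set lam"
  using nth_mem[of "k - 1" "remdups lam"] by (auto simp: upar_def dpar_def)

lemma upar_pos: "1 \<le> k \<Longrightarrow> k \<le> dpar lam \<Longrightarrow> 0 < upar lam k"
  using upar_in_set parts_pos by blast

lemma in_set_upar: "v \<in> set lam \<Longrightarrow> \<exists>k. 1 \<le> k \<and> k \<le> dpar lam \<and> v = upar lam k"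
proof -
  assume "v \<in> set lam"
  then obtain i where "i < length (remdups lam)" "remdups lam ! i = v"
    by (metis in_set_conv_nth set_remdups)
  then show ?thesis
    by (intro exI[of _ "Suc i"]) (auto simp: upar_def dpar_def)
qed

lemma upar_strict_antimono: "1 \<le> i \<Longrightarrow> i < j \<Longrightarrow> j \<le> dpar lam \<Longrightarrow> upar lam j < upar lam i"
  using distinct_parts_strict_antimono by (auto simp: upar_def dpar_def sorted_wrt_iff_nth_less)

lemma upar_Suc_less: "1 \<le> k \<Longrightarrow> k \<le> dpar lam \<Longrightarrow> upar lam (Suc k) < upar lam k"
  using upar_strict_antimono[of k "Suc k"] upar_pos[of k] by (cases "Suc k \<le> dpar lam") (auto simp: upar_def)

lemma upar_Suc_le: "1 \<le> k \<Longrightarrow> upar lam (Suc k) \<le> upar lam k"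
  using upar_strict_antimono[of k "Suc k"] by (cases "Suc k \<le> dpar lam") (auto simp: upar_def)

lemma upar_antimono: "1 \<le> i \<Longrightarrow> i \<le> j \<Longrightarrow> upar lam j \<le> upar lam i"
proof (induction j)
  case (Suc j)
  then show ?case
    using upar_Suc_le[of j] by (auto simp: le_Suc_eq)
qed simp

lemma hsum_telescope: "1 \<le> i \<Longrightarrow> i \<le> Suc j \<Longrightarrow> int (hsum lam i j) = int (upar lam i) - int (upar lam (Suc j))"
proof (induction j)
  case 0
  then show ?case by (simp add: hsum_def)
next
  case (Suc j)
  show ?case
  proof (cases "i = Suc (Suc j)")
    case False
    then have "hsum lam i (Suc j) = hsum lam i j + hpar lam (Suc j)"
      using Suc.prems by (simp add: hsum_def)
    moreover have "int (hpar lam (Suc j)) = int (upar lam (Suc j)) - int (upar lam (Suc (Suc j)))"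
      using upar_Suc_le[of "Suc j"] by (simp add: hpar_def of_nat_diff)
    ultimately show ?thesis
      using Suc False by simp
  qed (simp add: hsum_def)
qed

lemma prow_antimono: "1 \<le> y \<Longrightarrow> y \<le> y' \<Longrightarrow> prow lam y' \<le> prow lam y"
  using parts_antimono by (cases "y < y'") (auto simp: prow_def sorted_wrt_iff_nth_less)

lemma prow_eq_upar: "1 \<le> y \<Longrightarrow> 0 < prow lam y \<Longrightarrow> \<exists>k. 1 \<le> k \<and> k \<le> dpar lam \<and> prow lam y = upar lam k"
  using in_set_upar by (auto simp: prow_def split: if_splits)

lemma prow_le_upar_1: "1 \<le> y \<Longrightarrow> prow lam y \<le> upar lam 1"
  using prow_eq_upar upar_antimono by (cases "prow lam y = 0") fastforce+

lemma prow_le_upar_Suc: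
  assumes "1 \<le> y" "1 \<le> s" "prow lam y < upar lam s"
  shows "prow lam y \<le> upar lam (Suc s)"
proof (cases "prow lam y = 0")
  case False
  then obtain k where k: "1 \<le> k" "k \<le> dpar lam" "prow lam y = upar lam k"
    using prow_eq_upar assms(1) by blast
  then have "s < k"
    using upar_antimono[of k s] assms by fastforce
  then show ?thesis
    using upar_antimono[of "Suc s" k] k by simp
qed simp

lemma vpar_pos: "1 \<le> k \<Longrightarrow> k \<le> dpar lam \<Longrightarrow> 0 < vpar lam k"
  using upar_in_set by (auto simp: vpar_def filter_empty_conv)

lemma vpar_eq_card: "vpar lam k = card {y. 1 \<le> y \<and> y \<le> length lam \<and> prow lam y = upar lam k}"
proof -
  have "vpar lam k = card (Suc ` {i. i < length lam \<and> lam ! i = upar lam k})"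
    by (simp add: vpar_def length_filter_conv_card card_image)
  also have "Suc ` {i. i < length lam \<and> lam ! i = upar lam k} = {y. 1 \<le> y \<and> y \<le> length lam \<and> prow lam y = upar lam k}"
  proof (intro set_eqI iffI)
    fix y
    assume "y \<in> {y. 1 \<le> y \<and> y \<le> length lam \<and> prow lam y = upar lam k}"
    then have "y - 1 \<in> {i. i < length lam \<and> lam ! i = upar lam k}" "y = Suc (y - 1)"
      by (auto simp: prow_def)
    then show "y \<in> Suc ` {i. i < length lam \<and> lam ! i = upar lam k}"
      by blast
  qed (auto simp: prow_def)
  finally show ?thesis .
qed

lemma column_rows_upar_Suc:
  assumes "1 \<le> s" "s < dpar lam"
  shows "column_rows lam (upar lam (Suc s))
    = column_rows lam (upar lam s) \<union> {y. 1 \<le> y \<and> y \<le> length lam \<and> prow lam y = upar lam (Suc s)}"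
proof -
  have "y \<in> column_rows lam (upar lam s)"
    if "y \<in> column_rows lam (upar lam (Suc s))" "prow lam y \<noteq> upar lam (Suc s)" for y
    using prow_le_upar_Suc[of y s] assms that by (fastforce simp: column_rows_def)
  moreover have "column_rows lam (upar lam s) \<subseteq> column_rows lam (upar lam (Suc s))"
    using upar_Suc_le[of s] assms by (auto simp: column_rows_def)
  ultimately show ?thesis
    using column_rows_subset[of "upar lam (Suc s)" lam] upar_pos[of "Suc s"] assms
    by (auto simp: column_rows_def)
qed

lemma vsum_eq_card_column_rows: "1 \<le> s \<Longrightarrow> s \<le> dpar lam \<Longrightarrow> vsum lam 1 s = card (column_rows lam (upar lam s))"
proof (induction s)
  case (Suc s)
  show ?case
  proof (cases "s = 0")
    case True
    have "column_rows lam (upar lam 1) = {y. 1 \<le> y \<and> y \<le> length lam \<and> prow lam y = upar lam 1}"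
      using prow_le_upar_1 column_rows_subset[of "upar lam 1" lam] upar_pos[of 1] Suc.prems
      by (auto simp: column_rows_def intro: order.antisym)
    then show ?thesis
      using True by (simp add: vsum_def vpar_eq_card)
  next
    case False
    then have s: "1 \<le> s" "s < dpar lam"
      using Suc.prems by auto
    have "column_rows lam (upar lam s) \<inter> {y. 1 \<le> y \<and> y \<le> length lam \<and> prow lam y = upar lam (Suc s)} = {}"
      using upar_Suc_less[of s] s by (auto simp: column_rows_def)
    moreover have "finite (column_rows lam (upar lam s))"
      using finite_column_rows upar_pos[of s] s by simp
    ultimately show ?thesis
      using Suc.IH s by (simp add: vsum_def column_rows_upar_Suc vpar_eq_card card_Un_disjoint)
  qed
qed simp

lemma column_rows_upar:
  assumes "1 \<le> s" "s \<le> dpar lam"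
  shows "column_rows lam (upar lam s) = {1..vsum lam 1 s}"
proof -
  have "column_rows lam (upar lam s) = {1..card (column_rows lam (upar lam s))}"
  proof (rule initial_segment_eq)
    show "column_rows lam (upar lam s) \<subseteq> {1..length lam}"
      using column_rows_subset upar_pos[OF assms] by (simp add: Suc_leI)
  next
    fix y y'
    assume "y \<in> column_rows lam (upar lam s)" "1 \<le> y'" "y' \<le> y"
    then show "y' \<in> column_rows lam (upar lam s)"
      using prow_antimono[of y' y] by (auto simp: column_rows_def)
  qed
  then show ?thesis
    using vsum_eq_card_column_rows[OF assms] by simp
qed

lemma upar_le_prow_iff:
  "1 \<le> s \<Longrightarrow> s \<le> dpar lam \<Longrightarrow> 1 \<le> y \<Longrightarrow> upar lam s \<le> prow lam y \<longleftrightarrow> y \<le> vsum lam 1 s"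
  using column_rows_upar[of s] by (auto simp: column_rows_def set_eq_iff)

lemma vsum_le_length: "s \<le> dpar lam \<Longrightarrow> vsum lam 1 s \<le> length lam"
  using column_rows_upar[of s] column_rows_subset[of "upar lam s" lam] upar_pos[of s]
  by (cases "s = 0") (auto simp: vsum_def Suc_le_eq)

lemma vsum_less: "1 \<le> r \<Longrightarrow> r \<le> dpar lam \<Longrightarrow> vsum lam 1 (r - 1) < vsum lam 1 r"
  using vpar_pos[of r] vsum_split[of "r - 1" r lam] by (simp add: vsum_def)

lemma vsum_dpar: "vsum lam 1 (dpar lam) = length lam"
proof (cases "dpar lam = 0")
  case True
  then show ?thesis by (simp add: dpar_def vsum_def)
next
  case False
  have "y \<le> vsum lam 1 (dpar lam)" if "1 \<le> y" "y \<le> length lam" for y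
  proof -
    have "prow lam y \<in> set lam"
      using that by (simp add: prow_def)
    then obtain k where "1 \<le> k" "k \<le> dpar lam" "prow lam y = upar lam k"
      using in_set_upar by blast
    then show ?thesis
      using that upar_antimono[of k "dpar lam"] upar_le_prow_iff[of "dpar lam" y] False by simp
  qed
  moreover have "lam \<noteq> []"
    using False by (simp add: dpar_def)
  ultimately show ?thesis
    using vsum_le_length[of "dpar lam"] by (simp add: Suc_le_eq le_antisym)
qed

lemma prow_Suc_vsum: "s \<le> dpar lam \<Longrightarrow> prow lam (Suc (vsum lam 1 s)) = upar lam (Suc s)"
proof -
  assume s: "s \<le> dpar lam"
  show ?thesis
  proof (cases "s = dpar lam")
    case True
    then show ?thesis
      using vsum_dpar by (simp add: prow_def upar_def)
  next
    case False
    then have "upar lam (Suc s) \<le> prow lam (Suc (vsum lam 1 s))"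
      using vsum_less[of "Suc s"] upar_le_prow_iff[of "Suc s" "Suc (vsum lam 1 s)"] s by simp
    moreover have "prow lam (Suc (vsum lam 1 s)) \<le> upar lam (Suc s)"
    proof (cases "s = 0")
      case True
      then show ?thesis using prow_le_upar_1 by simp
    next
      case False
      then have "prow lam (Suc (vsum lam 1 s)) < upar lam s"
        using upar_le_prow_iff[of s "Suc (vsum lam 1 s)"] s by simp
      then show ?thesis
        using prow_le_upar_Suc[of "Suc (vsum lam 1 s)" s] False by simp
    qed
    ultimately show ?thesis by simp
  qed
qed

lemma pconj_Suc_upar: "s \<le> dpar lam \<Longrightarrow> pconj lam (upar lam (Suc s) + 1) = vsum lam 1 s"
proof -
  assume s: "s \<le> dpar lam"
  have "column_rows lam (upar lam (Suc s) + 1) = {1..vsum lam 1 s}"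
  proof (cases "s = 0")
    case True
    have "\<not> upar lam 1 + 1 \<le> prow lam y" if "1 \<le> y" for y
      using prow_le_upar_1[OF that] by simp
    then show ?thesis
      using True by (auto simp: vsum_def column_rows_def)
  next
    case False
    then have s1: "1 \<le> s"
      by simp
    have "upar lam (Suc s) + 1 \<le> prow lam y \<longleftrightarrow> upar lam s \<le> prow lam y" if "1 \<le> y" for y
    proof
      assume "upar lam (Suc s) + 1 \<le> prow lam y"
      then show "upar lam s \<le> prow lam y"
        using prow_le_upar_Suc[OF that s1] by linarith
    next
      assume "upar lam s \<le> prow lam y"
      then show "upar lam (Suc s) + 1 \<le> prow lam y"
        using upar_Suc_less[OF s1 s] by linarith
    qed
    then show ?thesis
      using column_rows_upar[of s] s False by (auto simp: column_rows_def)
  qed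
  then show ?thesis
    by (simp add: pconj_eq_card_column_rows)
qed

lemma cell_added_lam_plus: "s \<le> dpar lam \<Longrightarrow> cell_added (lam_plus lam s) lam (Suc (vsum lam 1 s))"
  unfolding cell_added_def lam_plus_def
  using add_cell_prow[of "Suc (vsum lam 1 s)" lam] vsum_le_length[of s] prow_Suc_vsum[of s] pconj_Suc_upar[of s]
  by simp

lemma prow_vsum: "1 \<le> r \<Longrightarrow> r \<le> dpar lam \<Longrightarrow> prow lam (vsum lam 1 r) = upar lam r"
proof -
  assume r: "1 \<le> r" "r \<le> dpar lam"
  have Y: "1 \<le> vsum lam 1 r"
    using vsum_less[OF r] by simp
  have "upar lam r \<le> prow lam (vsum lam 1 r)"
    using upar_le_prow_iff[OF r Y] by simp
  moreover have "prow lam (vsum lam 1 r) \<le> upar lam r"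
  proof (cases "r = 1")
    case True
    then show ?thesis using prow_le_upar_1[OF Y] by simp
  next
    case False
    then have r': "1 \<le> r - 1" "r - 1 \<le> dpar lam"
      using r by auto
    have "prow lam (vsum lam 1 r) < upar lam (r - 1)"
      using upar_le_prow_iff[OF r' Y] vsum_less[OF r] by simp
    then show ?thesis
      using prow_le_upar_Suc[OF Y r'(1)] r' by simp
  qed
  ultimately show ?thesis by simp
qed

lemma vsum_eq_length_if_upar_eq_1:
  assumes "1 \<le> r" "r \<le> dpar lam" "upar lam r = 1"
  shows "vsum lam 1 r = length lam"
proof (rule ccontr)
  assume "vsum lam 1 r \<noteq> length lam"
  then have "Suc (vsum lam 1 r) \<le> length lam"
    using vsum_le_length[OF assms(2)] by simp
  then have "0 < prow lam (Suc (vsum lam 1 r))"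
    using parts_pos by (simp add: prow_def)
  then show False
    using upar_le_prow_iff[OF assms(1,2), of "Suc (vsum lam 1 r)"] assms(3) by simp
qed

lemma prow_lam_minus:
  assumes "1 \<le> r" "r \<le> dpar lam"
  shows "prow (lam_minus lam r) = (prow lam)(vsum lam 1 r := upar lam r - 1)"
proof -
  have Y: "1 \<le> vsum lam 1 r" "vsum lam 1 r \<le> length lam"
    using vsum_less[OF assms] vsum_le_length[OF assms(2)] by simp_all
  then have "lam ! (vsum lam 1 r - 1) = upar lam r"
    using prow_vsum[OF assms] by (simp add: prow_def)
  moreover have "0 \<notin> set lam"
    using parts_pos by blast
  ultimately show ?thesis
    using rem_cell_prow[OF Y] vsum_eq_length_if_upar_eq_1[OF assms] assms prow_vsum[OF assms]
    by (simp add: lam_minus_def)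
qed

lemma cell_added_lam_minus: "1 \<le> r \<Longrightarrow> r \<le> dpar lam \<Longrightarrow> cell_added lam (lam_minus lam r) (vsum lam 1 r)"
proof -
  assume r: "1 \<le> r" "r \<le> dpar lam"
  let ?Y = "vsum lam 1 r" and ?mu = "lam_minus lam r"
  have Y: "1 \<le> ?Y"
    using vsum_less[OF r] by simp
  have pos: "0 < upar lam r"
    using upar_pos[OF r] .
  have "prow lam = (prow ?mu)(?Y := prow ?mu ?Y + 1)"
    using prow_lam_minus[OF r] pos prow_vsum[OF r] by (auto simp: fun_eq_iff)
  moreover have "column_rows ?mu (upar lam r) = {1..?Y - 1}"
    using upar_le_prow_iff[OF r] pos Y by (auto simp: column_rows_def prow_lam_minus[OF r])
  then have "pconj ?mu (prow ?mu ?Y + 1) = ?Y - 1"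
    using prow_lam_minus[OF r] pos by (simp add: pconj_eq_card_column_rows)
  ultimately show ?thesis
    unfolding cell_added_def using Y by simp
qed

lemma gA_gB_lam_plus_minus:
  assumes "s \<le> dpar lam" "1 \<le> r" "r \<le> dpar lam"
  shows "gA (lam_plus lam s) lam (lam_minus lam r) = int (upar lam r) - 1 - int (upar lam (Suc s))"
    and "gB (lam_plus lam s) lam (lam_minus lam r) = int (vsum lam 1 s) + 1 - int (vsum lam 1 r)"
proof -
  interpret upper: cell_added "lam_plus lam s" lam "Suc (vsum lam 1 s)"
    using cell_added_lam_plus[OF assms(1)] .
  interpret lower: cell_added lam "lam_minus lam r" "vsum lam 1 r"
    using cell_added_lam_minus[OF assms(2,3)] .
  have "prow (lam_minus lam r) (vsum lam 1 r) = upar lam r - 1" "0 < upar lam r" "0 < vsum lam 1 r"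
    using prow_lam_minus[OF assms(2,3)] upar_pos[OF assms(2,3)] vsum_less[OF assms(2,3)] by simp_all
  then show "gA (lam_plus lam s) lam (lam_minus lam r) = int (upar lam r) - 1 - int (upar lam (Suc s))"
    and "gB (lam_plus lam s) lam (lam_minus lam r) = int (vsum lam 1 s) + 1 - int (vsum lam 1 r)"
    using upper.nfun'_diff lower.nfun'_diff upper.nfun_diff lower.nfun_diff prow_Suc_vsum[OF assms(1)]
    by (simp_all add: gA_def gB_def of_nat_diff)
qed

lemma taucol_div_gammap:
  fixes q t :: real
  assumes "1 \<le> r" "r \<le> dpar lam" "s \<le> dpar lam" "q \<noteq> 0" "t \<noteq> 0"
  defines "A \<equiv> int (upar lam r) - 1 - int (upar lam (Suc s))"
    and "B \<equiv> int (vsum lam 1 s) + 1 - int (vsum lam 1 r)"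
  shows "q powi A * t powi (2 * B - 1) / gamma_ab q t A B = taucol q t lam r s / gammap q t lam r s"
proof (cases "r \<le> s")
  case True
  define H where "H = int (hsum lam r s)"
  define V where "V = int (vsum lam (Suc r) s)"
  have "A = H - 1" "B = V + 1"
    using hsum_telescope[of r s] vsum_split[OF True, of lam] True assms(1)
    by (simp_all add: A_def B_def H_def V_def)
  moreover have "taucol q t lam r s = q powi (H - 1) * t powi (2 * (V + 1) - 1)"
    using True assms(1) by (simp add: taucol_def H_def V_def algebra_simps)
  moreover have "gammap q t lam r s = gamma_ab q t (H - 1) (V + 1)"
    using True assms(1) by (simp add: gammap_def gamma_ab_def H_def V_def mult.commute)
  ultimately show ?thesis
    by simp
next
  case False
  define H where "H = int (hsum lam (Suc s) (r - 1))"
  define V where "V = int (vsum lam (Suc s) r)"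
  have AB: "A = - H - 1" "B = 1 - V"
    using hsum_telescope[of "Suc s" "r - 1"] vsum_split[of s r lam] False assms(1)
    by (simp_all add: A_def B_def H_def V_def)
  have "q powi A * t powi (2 * B - 1) / gamma_ab q t A B
      = q powi (- H - 1) * t powi (1 - 2 * V) / (q powi (-2 * H - 1) * t powi (1 - 2 * V) * gamma_ab q t H V)"
    unfolding AB gamma_ab_reflect[OF assms(4,5)] by (simp add: algebra_simps)
  also have "\<dots> = (q powi (- H - 1) / q powi (-2 * H - 1)) / gamma_ab q t H V"
    using assms(5) by (simp add: divide_inverse mult_ac inverse_mult_distrib)
  also have "q powi (- H - 1) / q powi (-2 * H - 1) = q powi H"
    using power_int_diff[of q "- H - 1" "-2 * H - 1"] assms(4) by simp
  finally have "q powi A * t powi (2 * B - 1) / gamma_ab q t A B = q powi H / gamma_ab q t H V" .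
  moreover have "taucol q t lam r s = q powi H" "gammap q t lam r s = gamma_ab q t H V"
    using False by (simp_all add: taucol_def gammap_def gamma_ab_def H_def V_def)
  ultimately show ?thesis
    by simp
qed

lemma P0_lam_plus_inverse:
  fixes q t :: real
  assumes "s \<le> dpar lam" "q \<noteq> 0" "t \<noteq> 0"
  shows "P0 (1/q) (1/t) lam (lam_plus lam s) = q ^ hsum lam (s + 1) (dpar lam) * alpha q t (lam_plus lam s) lam"
    and "P0bar (1/q) (1/t) lam (lam_plus lam s) = q ^ hsum lam (s + 1) (dpar lam) * alphabar q t (lam_plus lam s) lam"
proof -
  have "hsum lam (s + 1) (dpar lam) = upar lam (Suc s)"
    using hsum_telescope[of "Suc s" "dpar lam"] assms(1) by (simp add: upar_def)
  then show "P0 (1/q) (1/t) lam (lam_plus lam s) = q ^ hsum lam (s + 1) (dpar lam) * alpha q t (lam_plus lam s) lam"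
    and "P0bar (1/q) (1/t) lam (lam_plus lam s) = q ^ hsum lam (s + 1) (dpar lam) * alphabar q t (lam_plus lam s) lam"
    using cell_added.P0_inverse[OF cell_added_lam_plus[OF assms(1)] assms(2,3)] prow_Suc_vsum[OF assms(1)]
    by simp_all
qed

lemma P1_lam_minus_plus_inverse:
  fixes q t :: real
  assumes "1 \<le> r" "r \<le> dpar lam" "s \<le> dpar lam" "q \<noteq> 0" "t \<noteq> 0"
  shows "P1 (1/q) (1/t) lam (lam_minus lam r) (lam_plus lam s)
      = taucol q t lam r s * alpha q t (lam_plus lam s) lam * beta q t lam (lam_minus lam r) / gammap q t lam r s"
    and "P1bar (1/q) (1/t) lam (lam_minus lam r) (lam_plus lam s)
      = taucol q t lam r s * alphabar q t (lam_plus lam s) lam * betabar q t lam (lam_minus lam r) / gammap q t lam r s"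
proof -
  let ?nu = "lam_plus lam s" and ?mu = "lam_minus lam r"
  have "q powi gA ?nu lam ?mu * t powi (2 * gB ?nu lam ?mu - 1) / gamma q t ?nu lam ?mu
      = taucol q t lam r s / gammap q t lam r s"
    using taucol_div_gammap[OF assms]
    by (simp add: gamma_eq_gamma_ab gA_gB_lam_plus_minus[OF assms(3,1,2)])
  then have "q powi gA ?nu lam ?mu * t powi (2 * gB ?nu lam ?mu - 1) * a * b / gamma q t ?nu lam ?mu
      = taucol q t lam r s * a * b / gammap q t lam r s" for a b :: real
    by (metis times_divide_eq_left)
  then show "P1 (1/q) (1/t) lam ?mu ?nu
      = taucol q t lam r s * alpha q t ?nu lam * beta q t lam ?mu / gammap q t lam r s"
    and "P1bar (1/q) (1/t) lam ?mu ?nu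
      = taucol q t lam r s * alphabar q t ?nu lam * betabar q t lam ?mu / gammap q t lam r s"
    using P1_inverse[OF cell_added_lam_plus[OF assms(3)] cell_added_lam_minus[OF assms(1,2)] assms(4,5)]
    by simp_all
qed

end

theorem lemma5p1:
  fixes lam :: "nat list" and q t :: real and r s :: nat
  assumes "is_partition lam"
    and "generic_qt q t"
    and "s \<le> dpar lam"
    and "r \<le> dpar lam"
  shows "pcol q t lam r s =
           (if r = 0 then q ^ hsum lam (s + 1) (dpar lam) * alpha q t (lam_plus lam s) lam
            else taucol q t lam r s * alpha q t (lam_plus lam s) lam * beta q t lam (lam_minus lam r)
                   / gammap q t lam r s)
       \<and> pbarcol q t lam r s =
           (if r = 0 then q ^ hsum lam (s + 1) (dpar lam) * alphabar q t (lam_plus lam s) lam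
            else taucol q t lam r s * alphabar q t (lam_plus lam s) lam * betabar q t lam (lam_minus lam r)
                   / gammap q t lam r s)"
proof -
  have q: "q \<noteq> 0" and t: "t \<noteq> 0"
    using assms(2) by (simp_all add: generic_qt_def)
  show ?thesis
  proof (cases "r = 0")
    case True
    then show ?thesis
      using P0_lam_plus_inverse[OF assms(1,3) q t] by (simp add: pcol_def pbarcol_def ppar_def pbarpar_def)
  next
    case False
    then show ?thesis
      using P1_lam_minus_plus_inverse[OF assms(1) _ assms(4,3) q t]
      by (simp add: pcol_def pbarcol_def ppar_def pbarpar_def)
  qed
qed

end
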